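(* Let $\alpha_a$ be a labeled dGL hybrid game. If $S$ is an inductive Angelic subvalue map for $\alpha_a$, then $\models S(a)\rightarrow\langle\alpha\rangle S(\mathsf{end})$. Dually, if $S$ is an inductive Demonic subvalue map for $\alpha_a$, then $\models S(a)\rightarrow[\alpha] S(\mathsf{end})$.
   Context: Differential game logic (dGL). Hybrid games are generated by $\alpha,\beta ::= x:=e \mid \alpha;\beta \mid ?Q \mid \{x'=f(x)\,\&\,Q\} \mid \alpha^{*} \mid \alpha\cup\beta \mid x:=* \mid\ !Q \mid \{x'=f(x)\,\&\,Q\}^{d} \mid \alpha^{\times} \mid \alpha\cap\beta \mid x:=\otimes$, with $x$ a real variable (vector for ODEs), $e,f(x)$ polynomial terms, $Q$ a formula. Players Angel and Demon: $x:=e$ deterministic assignment; in $x:=*$ Angel (in $x:=\otimes$ Demon) assigns any real to $x$; in $\{x'=f(x)\&Q\}$ Angel (in $\{\cdot\}^d$ Demon) chooses a duration $r\ge 0$ of following the ODE with $Q$ true throughout; $?Q$ makes Angel lose and $!Q$ makes Demon lose if $Q$ is false; in $\alpha\cup\beta$ Angel (in $\alpha\cap\beta$ Demon) chooses the branch; in $\alpha^*$ Angel (in $\alpha^\times$ Demon) decides before each iteration whether to repeat or stop; $\alpha;\beta$ sequential. Formulas: polynomial (in)equalities closed under connectives, real quantifiers, and modalities $\langle\alpha\rangle\varphi$ (Angel has a winning strategy in $\alpha$ to reach $\varphi$) and $[\alpha]\varphi\equiv\neg\langle\alpha\rangle\neg\varphi$ (Demon has one), with the standard dGL winning-region semantics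 ($\langle x:=*\rangle\varphi\leftrightarrow\exists x\varphi$, $\langle x:=\otimes\rangle\varphi\leftrightarrow\forall x\varphi$, $\langle ?Q\rangle\varphi\leftrightarrow Q\wedge\varphi$, $\langle !Q\rangle\varphi\leftrightarrow(Q\rightarrow\varphi)$, $\cup$ as disjunction, $\cap$ as conjunction, $\langle\alpha;\beta\rangle\varphi\leftrightarrow\langle\alpha\rangle\langle\beta\rangle\varphi$, Angel ODE existential and Demon ODE universal over durations/solutions staying in $Q$, $\langle\alpha^*\rangle$ least and $\langle\alpha^\times\rangle$ greatest fixed point). $\models$ denotes validity. Labels: every node of the syntax tree carries a unique label; $\alpha_a$ has root label $a$; $\mathrm{nodes}(\alpha_a)$ is its set of subgame labels; $\mathsf{end}$ is a special extra label. A map $S$ assigns formulas to a label set containing $\mathrm{nodes}(\alpha_a)\cup\{\mathsf{end}\}$; $S\{\mathsf{end}\mapsto Q\}$ replaces the value at $\mathsf{end}$. $\gamma_g,\delta_d$ denote immediate subgames with root labels $g,d$. Angelic existential projection $\mathcal{P}(\alpha_a,S)$: $(x:=* )_a\mapsto(x:=* )_a;?S(\mathsf{end})$; Angel ODE $\mapsto$ ODE$;?S(\mathsf{end})$; $(\gamma_g\cup\delta_d)_a\mapsto(?S(g);\mathcal{P}(\gamma_g,S))\cup(?S(d);\mathcal{P}(\delta_d,S))$; $((\gamma_g)^* )_a\mapsto(?S(g);\mathcal{P}(\gamma_g,S\{\mathsf{end}\mapsto S(a)\}))^*;?S(\mathsf{end})$; $(\gamma_g;\delta_d)_a\mapsto\mathcal{P}(\gamma_g,S\{\mathsf{end}\mapsto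 S(d)\});\mathcal{P}(\delta_d,S)$; $\cap\mapsto\mathcal{P}(\gamma_g,S)\cap\mathcal{P}(\delta_d,S)$; $((\gamma_g)^\times)_a\mapsto\mathcal{P}(\gamma_g,S\{\mathsf{end}\mapsto S(a)\})^\times$; other atomic games unchanged (labels preserved, new nodes fresh labels). Demonic existential projection $\mathcal{D}(\alpha_a,S)$: $(x:=\otimes)_a\mapsto(x:=\otimes)_a;!S(\mathsf{end})$; Demon ODE $\mapsto$ ODE$^d;!S(\mathsf{end})$; $(\gamma_g\cap\delta_d)_a\mapsto(!S(g);\mathcal{D}(\gamma_g,S))\cap(!S(d);\mathcal{D}(\delta_d,S))$; $((\gamma_g)^\times)_a\mapsto(!S(g);\mathcal{D}(\gamma_g,S\{\mathsf{end}\mapsto S(g)\vee S(\mathsf{end})\}))^\times;!S(\mathsf{end})$; $(\gamma_g;\delta_d)_a\mapsto\mathcal{D}(\gamma_g,S\{\mathsf{end}\mapsto S(d)\});\mathcal{D}(\delta_d,S)$; $\cup\mapsto\mathcal{D}(\gamma_g,S)\cup\mathcal{D}(\delta_d,S)$; $((\gamma_g)^* )_a\mapsto\mathcal{D}(\gamma_g,S\{\mathsf{end}\mapsto S(a)\})^*$; other atomic games unchanged. Inductive Angelic subvalue map ($S\Vdash\alpha_a$), recursively: atomic $\alpha$: $\models S(a)\rightarrow\langle\alpha\rangle S(\mathsf{end})$; $\cup$: $\models S(a)\rightarrow S(g)\vee S(d)$, $S\Vdash\gamma_g$, $S\Vdash\delta_d$; $\cap$: $\models S(a)\rightarrow S(g)\wedge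 S(d)$ and both; $;$: $\models S(a)\rightarrow S(g)$, $S\{\mathsf{end}\mapsto S(d)\}\Vdash\gamma_g$, $S\Vdash\delta_d$; $((\gamma_g)^* )_a$: $\models S(a)\rightarrow\langle\mathcal{P}(\alpha_a,S)\rangle S(\mathsf{end})$ and $S\{\mathsf{end}\mapsto S(a)\}\Vdash\gamma_g$; $((\gamma_g)^\times)_a$: $\models S(a)\rightarrow S(g)\wedge S(\mathsf{end})$ and $S\{\mathsf{end}\mapsto S(a)\}\Vdash\gamma_g$. Inductive Demonic subvalue map, recursively: atomic: $\models S(a)\rightarrow[\alpha]S(\mathsf{end})$; $\cup$: $\models S(a)\rightarrow S(g)\wedge S(d)$ and both subgames; $\cap$: $\models S(a)\rightarrow S(g)\vee S(d)$ and both; $;$: $\models S(a)\rightarrow S(g)$, $S\{\mathsf{end}\mapsto S(d)\}$ for $\gamma_g$, $S$ for $\delta_d$; $((\gamma_g)^* )_a$: $\models S(a)\rightarrow S(\mathsf{end})\wedge S(g)$ and $S\{\mathsf{end}\mapsto S(a)\}$ for $\gamma_g$; $((\gamma_g)^\times)_a$: $\models S(a)\rightarrow[\mathcal{D}(\alpha_a,S)]S(\mathsf{end})$ and $S\{\mathsf{end}\mapsto S(a)\}$ for $\gamma_g$. *)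

theory Defs
  imports Complex_Main
begin

type_synonym ident = nat
type_synonym state = "ident \<Rightarrow> real"

datatype trm = Var ident | Const rat | Plus trm trm | Times trm trm | Neg trm

type_synonym ode = "(ident \<times> trm) list"

datatype fml =
    Geq trm trm | Gt trm trm | Eq trm trm
  | Not fml | And fml fml | Or fml fml | Imp fml fml
  | Ex ident fml | All ident fml
  | Dia game fml
and game =
    Assign ident trm
  | Seq game game
  | Test fml
  | ODE ode fml
  | Star game
  | Choice game game
  | Rand ident
  | DTest fml
  | DODE ode fml
  | Cross game                 (* alpha^\<times>, Demon *)
  | DChoice game game
  | DRand ident

definition Box :: "game \<Rightarrow> fml \<Rightarrow> fml" where
  "Box \<alpha> \<phi> = Not (Dia \<alpha> (Not \<phi>))"

primrec tsem :: "trm \<Rightarrow> state \<Rightarrow> real" where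
  "tsem (Var x) \<omega> = \<omega> x"
| "tsem (Const q) \<omega> = of_rat q"
| "tsem (Plus e1 e2) \<omega> = tsem e1 \<omega> + tsem e2 \<omega>"
| "tsem (Times e1 e2) \<omega> = tsem e1 \<omega> * tsem e2 \<omega>"
| "tsem (Neg e) \<omega> = - tsem e \<omega>"

definition odesol :: "ode \<Rightarrow> (real \<Rightarrow> state) \<Rightarrow> real \<Rightarrow> state \<Rightarrow> bool" where
  "odesol sys \<phi> r \<omega> \<longleftrightarrow>
     \<phi> 0 = \<omega> \<and>
     (\<forall>t\<in>{0..r}. \<forall>(x, \<theta>)\<in>set sys.
        ((\<lambda>s. \<phi> s x) has_real_derivative tsem \<theta> (\<phi> t)) (at t within {0..r})) \<and>
     (\<forall>t\<in>{0..r}. \<forall>y. y \<notin> fst ` set sys \<longrightarrow> \<phi> t y = \<omega> y)"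

text \<open>\<open>fsem \<phi>\<close> is the set of states where \<open>\<phi>\<close> holds;
  \<open>gsem \<alpha> X\<close> is Angel's winning region in \<open>\<alpha>\<close> for goal \<open>X\<close>.\<close>
primrec fsem :: "fml \<Rightarrow> state set"
  and gsem :: "game \<Rightarrow> state set \<Rightarrow> state set" where
  "fsem (Geq e1 e2) = {\<omega>. tsem e1 \<omega> \<ge> tsem e2 \<omega>}"
| "fsem (Gt e1 e2) = {\<omega>. tsem e1 \<omega> > tsem e2 \<omega>}"
| "fsem (Eq e1 e2) = {\<omega>. tsem e1 \<omega> = tsem e2 \<omega>}"
| "fsem (Not \<phi>) = - fsem \<phi>"
| "fsem (And \<phi> \<psi>) = fsem \<phi> \<inter> fsem \<psi>"
| "fsem (Or \<phi> \<psi>) = fsem \<phi> \<union> fsem \<psi>"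
| "fsem (Imp \<phi> \<psi>) = - fsem \<phi> \<union> fsem \<psi>"
| "fsem (Ex x \<phi>) = {\<omega>. \<exists>r. \<omega>(x := r) \<in> fsem \<phi>}"
| "fsem (All x \<phi>) = {\<omega>. \<forall>r. \<omega>(x := r) \<in> fsem \<phi>}"
| "fsem (Dia \<alpha> \<phi>) = gsem \<alpha> (fsem \<phi>)"
| "gsem (Assign x e) X = {\<omega>. \<omega>(x := tsem e \<omega>) \<in> X}"
| "gsem (Seq \<alpha> \<beta>) X = gsem \<alpha> (gsem \<beta> X)"
| "gsem (Test Q) X = fsem Q \<inter> X"
| "gsem (ODE sys Q) X = {\<omega>. \<exists>r \<phi>. r \<ge> 0 \<and> odesol sys \<phi> r \<omega> \<and>
                               (\<forall>t\<in>{0..r}. \<phi> t \<in> fsem Q) \<and> \<phi> r \<in> X}"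
| "gsem (Star \<alpha>) X = lfp (\<lambda>Z. X \<union> gsem \<alpha> Z)"
| "gsem (Choice \<alpha> \<beta>) X = gsem \<alpha> X \<union> gsem \<beta> X"
| "gsem (Rand x) X = {\<omega>. \<exists>r. \<omega>(x := r) \<in> X}"
| "gsem (DTest Q) X = - fsem Q \<union> X"
| "gsem (DODE sys Q) X = {\<omega>. \<forall>r \<phi>. r \<ge> 0 \<and> odesol sys \<phi> r \<omega> \<and>
                               (\<forall>t\<in>{0..r}. \<phi> t \<in> fsem Q) \<longrightarrow> \<phi> r \<in> X}"
| "gsem (Cross \<alpha>) X = gfp (\<lambda>Z. X \<inter> gsem \<alpha> Z)"
| "gsem (DChoice \<alpha> \<beta>) X = gsem \<alpha> X \<inter> gsem \<beta> X"
| "gsem (DRand x) X = {\<omega>. \<forall>r. \<omega>(x := r) \<in> X}"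

definition valid :: "fml \<Rightarrow> bool" where
  "valid \<phi> \<longleftrightarrow> (\<forall>\<omega>. \<omega> \<in> fsem \<phi>)"

datatype 'l lgame =
    LAssign 'l ident trm
  | LSeq 'l "'l lgame" "'l lgame"
  | LTest 'l fml
  | LODE 'l ode fml
  | LStar 'l "'l lgame"
  | LChoice 'l "'l lgame" "'l lgame"
  | LRand 'l ident
  | LDTest 'l fml
  | LDODE 'l ode fml
  | LCross 'l "'l lgame"
  | LDChoice 'l "'l lgame" "'l lgame"
  | LDRand 'l ident

datatype 'l lab = Lb 'l | End

primrec root :: "'l lgame \<Rightarrow> 'l" where
  "root (LAssign a x e) = a"
| "root (LSeq a g d) = a"
| "root (LTest a Q) = a"
| "root (LODE a sys Q) = a"
| "root (LStar a g) = a"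
| "root (LChoice a g d) = a"
| "root (LRand a x) = a"
| "root (LDTest a Q) = a"
| "root (LDODE a sys Q) = a"
| "root (LCross a g) = a"
| "root (LDChoice a g d) = a"
| "root (LDRand a x) = a"

primrec node_list :: "'l lgame \<Rightarrow> 'l list" where
  "node_list (LAssign a x e) = [a]"
| "node_list (LSeq a g d) = a # node_list g @ node_list d"
| "node_list (LTest a Q) = [a]"
| "node_list (LODE a sys Q) = [a]"
| "node_list (LStar a g) = a # node_list g"
| "node_list (LChoice a g d) = a # node_list g @ node_list d"
| "node_list (LRand a x) = [a]"
| "node_list (LDTest a Q) = [a]"
| "node_list (LDODE a sys Q) = [a]"
| "node_list (LCross a g) = a # node_list g"
| "node_list (LDChoice a g d) = a # node_list g @ node_list d"
| "node_list (LDRand a x) = [a]"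

definition nodes :: "'l lgame \<Rightarrow> 'l set" where
  "nodes \<alpha> = set (node_list \<alpha>)"

definition uniquely_labeled :: "'l lgame \<Rightarrow> bool" where
  "uniquely_labeled \<alpha> \<longleftrightarrow> distinct (node_list \<alpha>)"

primrec erase :: "'l lgame \<Rightarrow> game" where
  "erase (LAssign a x e) = Assign x e"
| "erase (LSeq a g d) = Seq (erase g) (erase d)"
| "erase (LTest a Q) = Test Q"
| "erase (LODE a sys Q) = ODE sys Q"
| "erase (LStar a g) = Star (erase g)"
| "erase (LChoice a g d) = Choice (erase g) (erase d)"
| "erase (LRand a x) = Rand x"
| "erase (LDTest a Q) = DTest Q"
| "erase (LDODE a sys Q) = DODE sys Q"
| "erase (LCross a g) = Cross (erase g)"
| "erase (LDChoice a g d) = DChoice (erase g) (erase d)"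
| "erase (LDRand a x) = DRand x"

type_synonym 'l smap = "'l lab \<Rightarrow> fml"

text \<open>Angelic existential projection \<open>\<P>(\<alpha>_a, S)\<close>.  Its result is only ever used
  inside modalities, so it is returned as an (unlabeled) game.\<close>
primrec proj_ang :: "'l lgame \<Rightarrow> 'l smap \<Rightarrow> game" where
  "proj_ang (LAssign a x e) S = Assign x e"
| "proj_ang (LSeq a g d) S =
     Seq (proj_ang g (S(End := S (Lb (root d))))) (proj_ang d S)"
| "proj_ang (LTest a Q) S = Test Q"
| "proj_ang (LODE a sys Q) S = Seq (ODE sys Q) (Test (S End))"
| "proj_ang (LStar a g) S =
     Seq (Star (Seq (Test (S (Lb (root g)))) (proj_ang g (S(End := S (Lb a))))))
         (Test (S End))"
| "proj_ang (LChoice a g d) S =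
     Choice (Seq (Test (S (Lb (root g)))) (proj_ang g S))
            (Seq (Test (S (Lb (root d)))) (proj_ang d S))"
| "proj_ang (LRand a x) S = Seq (Rand x) (Test (S End))"
| "proj_ang (LDTest a Q) S = DTest Q"
| "proj_ang (LDODE a sys Q) S = DODE sys Q"
| "proj_ang (LCross a g) S = Cross (proj_ang g (S(End := S (Lb a))))"
| "proj_ang (LDChoice a g d) S = DChoice (proj_ang g S) (proj_ang d S)"
| "proj_ang (LDRand a x) S = DRand x"

primrec proj_dem :: "'l lgame \<Rightarrow> 'l smap \<Rightarrow> game" where
  "proj_dem (LAssign a x e) S = Assign x e"
| "proj_dem (LSeq a g d) S =
     Seq (proj_dem g (S(End := S (Lb (root d))))) (proj_dem d S)"
| "proj_dem (LTest a Q) S = Test Q"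
| "proj_dem (LODE a sys Q) S = ODE sys Q"
| "proj_dem (LStar a g) S = Star (proj_dem g (S(End := S (Lb a))))"
| "proj_dem (LChoice a g d) S = Choice (proj_dem g S) (proj_dem d S)"
| "proj_dem (LRand a x) S = Rand x"
| "proj_dem (LDTest a Q) S = DTest Q"
| "proj_dem (LDODE a sys Q) S = Seq (DODE sys Q) (DTest (S End))"
| "proj_dem (LCross a g) S =
     Seq (Cross (Seq (DTest (S (Lb (root g))))
                     (proj_dem g (S(End := Or (S (Lb (root g))) (S End))))))
         (DTest (S End))"
| "proj_dem (LDChoice a g d) S =
     DChoice (Seq (DTest (S (Lb (root g)))) (proj_dem g S))
             (Seq (DTest (S (Lb (root d)))) (proj_dem d S))"
| "proj_dem (LDRand a x) S = Seq (DRand x) (DTest (S End))"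

primrec ang_subvalue :: "'l smap \<Rightarrow> 'l lgame \<Rightarrow> bool" where
  "ang_subvalue S (LAssign a x e) =
     valid (Imp (S (Lb a)) (Dia (Assign x e) (S End)))"
| "ang_subvalue S (LSeq a g d) =
     (valid (Imp (S (Lb a)) (S (Lb (root g)))) \<and>
      ang_subvalue (S(End := S (Lb (root d)))) g \<and> ang_subvalue S d)"
| "ang_subvalue S (LTest a Q) = valid (Imp (S (Lb a)) (Dia (Test Q) (S End)))"
| "ang_subvalue S (LODE a sys Q) = valid (Imp (S (Lb a)) (Dia (ODE sys Q) (S End)))"
| "ang_subvalue S (LStar a g) =
     (valid (Imp (S (Lb a)) (Dia (proj_ang (LStar a g) S) (S End))) \<and>
      ang_subvalue (S(End := S (Lb a))) g)"
| "ang_subvalue S (LChoice a g d) =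
     (valid (Imp (S (Lb a)) (Or (S (Lb (root g))) (S (Lb (root d))))) \<and>
      ang_subvalue S g \<and> ang_subvalue S d)"
| "ang_subvalue S (LRand a x) = valid (Imp (S (Lb a)) (Dia (Rand x) (S End)))"
| "ang_subvalue S (LDTest a Q) = valid (Imp (S (Lb a)) (Dia (DTest Q) (S End)))"
| "ang_subvalue S (LDODE a sys Q) = valid (Imp (S (Lb a)) (Dia (DODE sys Q) (S End)))"
| "ang_subvalue S (LCross a g) =
     (valid (Imp (S (Lb a)) (And (S (Lb (root g))) (S End))) \<and>
      ang_subvalue (S(End := S (Lb a))) g)"
| "ang_subvalue S (LDChoice a g d) =
     (valid (Imp (S (Lb a)) (And (S (Lb (root g))) (S (Lb (root d))))) \<and>
      ang_subvalue S g \<and> ang_subvalue S d)"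
| "ang_subvalue S (LDRand a x) = valid (Imp (S (Lb a)) (Dia (DRand x) (S End)))"

primrec dem_subvalue :: "'l smap \<Rightarrow> 'l lgame \<Rightarrow> bool" where
  "dem_subvalue S (LAssign a x e) =
     valid (Imp (S (Lb a)) (Box (Assign x e) (S End)))"
| "dem_subvalue S (LSeq a g d) =
     (valid (Imp (S (Lb a)) (S (Lb (root g)))) \<and>
      dem_subvalue (S(End := S (Lb (root d)))) g \<and> dem_subvalue S d)"
| "dem_subvalue S (LTest a Q) = valid (Imp (S (Lb a)) (Box (Test Q) (S End)))"
| "dem_subvalue S (LODE a sys Q) = valid (Imp (S (Lb a)) (Box (ODE sys Q) (S End)))"
| "dem_subvalue S (LStar a g) =
     (valid (Imp (S (Lb a)) (And (S End) (S (Lb (root g))))) \<and>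
      dem_subvalue (S(End := S (Lb a))) g)"
| "dem_subvalue S (LChoice a g d) =
     (valid (Imp (S (Lb a)) (And (S (Lb (root g))) (S (Lb (root d))))) \<and>
      dem_subvalue S g \<and> dem_subvalue S d)"
| "dem_subvalue S (LRand a x) = valid (Imp (S (Lb a)) (Box (Rand x) (S End)))"
| "dem_subvalue S (LDTest a Q) = valid (Imp (S (Lb a)) (Box (DTest Q) (S End)))"
| "dem_subvalue S (LDODE a sys Q) = valid (Imp (S (Lb a)) (Box (DODE sys Q) (S End)))"
| "dem_subvalue S (LCross a g) =
     (valid (Imp (S (Lb a)) (Box (proj_dem (LCross a g) S) (S End))) \<and>
      dem_subvalue (S(End := S (Lb a))) g)"
| "dem_subvalue S (LDChoice a g d) =
     (valid (Imp (S (Lb a)) (Or (S (Lb (root g))) (S (Lb (root d))))) \<and>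
      dem_subvalue S g \<and> dem_subvalue S d)"
| "dem_subvalue S (LDRand a x) = valid (Imp (S (Lb a)) (Box (DRand x) (S End)))"

end

theory Submission
  imports Defs
begin

(* Sequential composition
   chains the two subgame conditions through the intermediate formula S(root of the
   second game); choices split S(a) among the branch formulas.  For the opponent's
   loop, S(a) is an invariant: a post-fixed point of the greatest fixed point
   defining Angel's winning region in a Demon loop, and its complement a pre-fixed
   point of the least fixed point for an Angel loop.  For the player's own loop the
   subvalue condition already asserts a win in the existential projection, and
   projecting only adds tests against the projecting player, so a win in the
   projection is a win in the original game. *)

lemma valid_Imp_iff: "valid (Imp \<phi> \<psi>) \<longleftrightarrow> fsem \<phi> \<subseteq> fsem \<psi>"
  by (auto simp: valid_def)

lemma fsem_Box [simp]: "fsem (Box \<alpha> \<phi>) = - gsem \<alpha> (- fsem \<phi>)"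
  by (simp add: Box_def)

lemma mono_gsem: "mono (gsem \<alpha>)"
  \<comment> \<open>formulas inside a game are only tested, never used as goals, so they need no hypothesis\<close>
  by (induction \<alpha> rule: game.induct[where ?P1.0 = "\<lambda>_. True"])
    (auto intro!: monoI lfp_mono gfp_mono dest: monoD)

lemma gsem_mono: "X \<subseteq> Y \<Longrightarrow> gsem \<alpha> X \<subseteq> gsem \<alpha> Y"
  using mono_gsem by (rule monoD)

lemma gsem_proj_ang_subset_erase: "gsem (proj_ang \<alpha> S) X \<subseteq> gsem (erase \<alpha>) X"
proof (induction \<alpha> arbitrary: S X)
  case (LSeq a g d)
  let ?S' = "S(End := S (Lb (root d)))"
  have "gsem (proj_ang g ?S') (gsem (proj_ang d S) X) \<subseteq> gsem (proj_ang g ?S') (gsem (erase d) X)"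
    using LSeq.IH(2) by (rule gsem_mono)
  also have "\<dots> \<subseteq> gsem (erase g) (gsem (erase d) X)"
    using LSeq.IH(1) .
  finally show ?case by simp
next
  case (LStar a g)
  then show ?case by (auto intro!: lfp_mono)
next
  case (LCross a g)
  then show ?case by (auto intro!: gfp_mono)
qed (simp; blast)+

lemma gsem_erase_subset_proj_dem: "gsem (erase \<alpha>) X \<subseteq> gsem (proj_dem \<alpha> S) X"
proof (induction \<alpha> arbitrary: S X)
  case (LSeq a g d)
  let ?S' = "S(End := S (Lb (root d)))"
  have "gsem (erase g) (gsem (erase d) X) \<subseteq> gsem (proj_dem g ?S') (gsem (erase d) X)"
    using LSeq.IH(1) .
  also have "\<dots> \<subseteq> gsem (proj_dem g ?S') (gsem (proj_dem d S) X)"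
    using LSeq.IH(2) by (rule gsem_mono)
  finally show ?case by simp
next
  case (LStar a g)
  then show ?case by (auto intro!: lfp_mono)
next
  case (LCross a g)
  then show ?case by (auto intro!: gfp_mono)
qed (simp; blast)+

lemma ang_subvalue_sound:
  "ang_subvalue S \<alpha> \<Longrightarrow> fsem (S (Lb (root \<alpha>))) \<subseteq> gsem (erase \<alpha>) (fsem (S End))"
proof (induction \<alpha> arbitrary: S)
  case (LSeq a g d)
  have IH_g: "fsem (S (Lb (root g))) \<subseteq> gsem (erase g) (fsem (S (Lb (root d))))"
    using LSeq.IH(1) LSeq.prems by fastforce
  have IH_d: "fsem (S (Lb (root d))) \<subseteq> gsem (erase d) (fsem (S End))"
    using LSeq.IH(2) LSeq.prems by fastforce
  have "fsem (S (Lb a)) \<subseteq> fsem (S (Lb (root g)))"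
    using LSeq.prems by (simp add: valid_Imp_iff)
  also note IH_g
  also have "gsem (erase g) (fsem (S (Lb (root d)))) \<subseteq> gsem (erase g) (gsem (erase d) (fsem (S End)))"
    using IH_d by (rule gsem_mono)
  finally show ?case by simp
next
  case (LStar a g)
  then have "fsem (S (Lb a)) \<subseteq> gsem (proj_ang (LStar a g) S) (fsem (S End))"
    by (simp add: valid_Imp_iff del: proj_ang.simps gsem.simps)
  also have "\<dots> \<subseteq> gsem (erase (LStar a g)) (fsem (S End))"
    by (rule gsem_proj_ang_subset_erase)
  finally show ?case by simp
next
  case (LChoice a g d)
  have "fsem (S (Lb (root g))) \<subseteq> gsem (erase g) (fsem (S End))"
    and "fsem (S (Lb (root d))) \<subseteq> gsem (erase d) (fsem (S End))"
    using LChoice.IH LChoice.prems by fastforce+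
  moreover have "fsem (S (Lb a)) \<subseteq> fsem (S (Lb (root g))) \<union> fsem (S (Lb (root d)))"
    using LChoice.prems by (simp add: valid_Imp_iff)
  ultimately show ?case by auto
next
  case (LCross a g)
  have "fsem (S (Lb a)) \<subseteq> fsem (S (Lb (root g))) \<inter> fsem (S End)"
    using LCross.prems by (simp add: valid_Imp_iff)
  moreover have "fsem (S (Lb (root g))) \<subseteq> gsem (erase g) (fsem (S (Lb a)))"
    using LCross.IH LCross.prems by fastforce
  ultimately have "fsem (S (Lb a)) \<subseteq> gfp (\<lambda>Z. fsem (S End) \<inter> gsem (erase g) Z)"
    by (intro gfp_upperbound) blast
  then show ?case by simp
next
  case (LDChoice a g d)
  have "fsem (S (Lb (root g))) \<subseteq> gsem (erase g) (fsem (S End))"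
    and "fsem (S (Lb (root d))) \<subseteq> gsem (erase d) (fsem (S End))"
    using LDChoice.IH LDChoice.prems by fastforce+
  moreover have "fsem (S (Lb a)) \<subseteq> fsem (S (Lb (root g))) \<inter> fsem (S (Lb (root d)))"
    using LDChoice.prems by (simp add: valid_Imp_iff)
  ultimately show ?case by auto
qed (simp_all add: valid_Imp_iff)

lemma dem_subvalue_sound:
  "dem_subvalue S \<alpha> \<Longrightarrow> fsem (S (Lb (root \<alpha>))) \<subseteq> - gsem (erase \<alpha>) (- fsem (S End))"
proof (induction \<alpha> arbitrary: S)
  case (LSeq a g d)
  have IH_g: "fsem (S (Lb (root g))) \<subseteq> - gsem (erase g) (- fsem (S (Lb (root d))))"
    using LSeq.IH(1) LSeq.prems by fastforce
  have IH_d: "fsem (S (Lb (root d))) \<subseteq> - gsem (erase d) (- fsem (S End))"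
    using LSeq.IH(2) LSeq.prems by fastforce
  have "fsem (S (Lb a)) \<subseteq> fsem (S (Lb (root g)))"
    using LSeq.prems by (simp add: valid_Imp_iff)
  also note IH_g
  also have "- gsem (erase g) (- fsem (S (Lb (root d))))
      \<subseteq> - gsem (erase g) (gsem (erase d) (- fsem (S End)))"
    using IH_d by (intro compl_mono gsem_mono) blast
  finally show ?case by simp
next
  case (LStar a g)
  have "fsem (S (Lb a)) \<subseteq> fsem (S End) \<inter> fsem (S (Lb (root g)))"
    using LStar.prems by (simp add: valid_Imp_iff)
  moreover have "fsem (S (Lb (root g))) \<subseteq> - gsem (erase g) (- fsem (S (Lb a)))"
    using LStar.IH LStar.prems by fastforce
  ultimately have "lfp (\<lambda>Z. - fsem (S End) \<union> gsem (erase g) Z) \<subseteq> - fsem (S (Lb a))"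
    by (intro lfp_lowerbound) blast
  then show ?case by auto
next
  case (LChoice a g d)
  have "fsem (S (Lb (root g))) \<subseteq> - gsem (erase g) (- fsem (S End))"
    and "fsem (S (Lb (root d))) \<subseteq> - gsem (erase d) (- fsem (S End))"
    using LChoice.IH LChoice.prems by fastforce+
  moreover have "fsem (S (Lb a)) \<subseteq> fsem (S (Lb (root g))) \<inter> fsem (S (Lb (root d)))"
    using LChoice.prems by (simp add: valid_Imp_iff)
  ultimately show ?case by auto
next
  case (LCross a g)
  then have "fsem (S (Lb a)) \<subseteq> - gsem (proj_dem (LCross a g) S) (- fsem (S End))"
    by (simp add: valid_Imp_iff del: proj_dem.simps gsem.simps)
  also have "\<dots> \<subseteq> - gsem (erase (LCross a g)) (- fsem (S End))"
    by (intro compl_mono gsem_erase_subset_proj_dem)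
  finally show ?case by simp
next
  case (LDChoice a g d)
  have "fsem (S (Lb (root g))) \<subseteq> - gsem (erase g) (- fsem (S End))"
    and "fsem (S (Lb (root d))) \<subseteq> - gsem (erase d) (- fsem (S End))"
    using LDChoice.IH LDChoice.prems by fastforce+
  moreover have "fsem (S (Lb a)) \<subseteq> fsem (S (Lb (root g))) \<union> fsem (S (Lb (root d)))"
    using LDChoice.prems by (simp add: valid_Imp_iff)
  ultimately show ?case by auto
qed (simp_all add: valid_Imp_iff)

theorem mainTheorem4:
  fixes \<alpha> :: "'l lgame" and S :: "'l lab \<Rightarrow> fml"
  assumes "uniquely_labeled \<alpha>"
  shows "(ang_subvalue S \<alpha> \<longrightarrow> valid (Imp (S (Lb (root \<alpha>))) (Dia (erase \<alpha>) (S End))))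
       \<and> (dem_subvalue S \<alpha> \<longrightarrow> valid (Imp (S (Lb (root \<alpha>))) (Box (erase \<alpha>) (S End))))"
  using ang_subvalue_sound[of S \<alpha>] dem_subvalue_sound[of S \<alpha>] by (simp add: valid_Imp_iff)

end
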